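(* Let $1,2,3,4$ be four distinct vertices of $G$ such that $G[\{1,2,3\}]$ has edge set exactly $\{12,13,23\}$, $G[\{2,3,4\}]$ has edge set exactly $\{23,24,34\}$, and $w_{12}\ge\max\{w_{13},w_{23}\}$ (nothing is assumed about whether $14$ is an edge). If $\Gamma_G$ is population monotonic, then $w_{24}\ge w_{23}+w_{34}$.
   Context: $G=(V,E;w)$ is a finite simple graph with edge weights $w:E\to\mathbb{R}$, $w_e>0$ for all $e\in E$; $w_{ij}$ denotes the weight of edge $ij$. The matching game on $G$ is the cooperative game $\Gamma_G=(N,\gamma)$ with player set $N=V$ and, for $S\subseteq N$, $\gamma(S)$ equal to the maximum weight of a matching in the induced subgraph $G[S]$ (so $\gamma(\emptyset)=0$). A population monotonic allocation scheme (PMAS) is a family $(\boldsymbol{x}_S)_{\emptyset\neq S\subseteq N}$ with $\boldsymbol{x}_S=(x_{S,i})_{i\in S}\in\mathbb{R}^S$ such that (efficiency) $\sum_{i\in S}x_{S,i}=\gamma(S)$ for every nonempty $S\subseteq N$, and (monotonicity) $x_{S,i}\le x_{T,i}$ whenever $\emptyset\ne S\subseteq T\subseteq N$ and $i\in S$. $\Gamma_G$ is called population monotonic if it admits a PMAS. *)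

theory Defs
  imports Complex_Main
begin

definition simple_graph :: "'a set \<Rightarrow> 'a set set \<Rightarrow> bool" where
  "simple_graph V E \<longleftrightarrow> finite V \<and> (\<forall>e\<in>E. e \<subseteq> V \<and> card e = 2)"

definition positive_weights :: "'a set set \<Rightarrow> ('a set \<Rightarrow> real) \<Rightarrow> bool" where
  "positive_weights E w \<longleftrightarrow> (\<forall>e\<in>E. w e > 0)"

definition matching_in :: "'a set set \<Rightarrow> 'a set \<Rightarrow> 'a set set \<Rightarrow> bool" where
  "matching_in E S M \<longleftrightarrow> M \<subseteq> E \<and> (\<forall>e\<in>M. e \<subseteq> S) \<and>
     (\<forall>e\<in>M. \<forall>f\<in>M. e \<noteq> f \<longrightarrow> e \<inter> f = {})"

definition gamma :: "'a set set \<Rightarrow> ('a set \<Rightarrow> real) \<Rightarrow> 'a set \<Rightarrow> real" where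
  "gamma E w S = Max {sum w M | M. matching_in E S M}"

definition is_PMAS :: "'a set \<Rightarrow> 'a set set \<Rightarrow> ('a set \<Rightarrow> real) \<Rightarrow> ('a set \<Rightarrow> 'a \<Rightarrow> real) \<Rightarrow> bool" where
  "is_PMAS V E w x \<longleftrightarrow>
     (\<forall>S. S \<subseteq> V \<and> S \<noteq> {} \<longrightarrow> (\<Sum>i\<in>S. x S i) = gamma E w S) \<and>
     (\<forall>S T i. S \<noteq> {} \<and> S \<subseteq> T \<and> T \<subseteq> V \<and> i \<in> S \<longrightarrow> x S i \<le> x T i)"

definition population_monotonic :: "'a set \<Rightarrow> 'a set set \<Rightarrow> ('a set \<Rightarrow> real) \<Rightarrow> bool" where
  "population_monotonic V E w \<longleftrightarrow> (\<exists>x. is_PMAS V E w x)"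

end

theory Submission
  imports Defs
begin

text \<open>Monotonicity pushes the allocations of the pair 12 up into the triangle 123, where
  they already exhaust the value, so player 3 gets nothing in 123 and hence nothing in 23.
  Then the pair 23 hands all of its value to player 2, the pair 34 hands all of its value
  to players 3 and 4, and monotonicity makes the triangle 234 pay at least
  \<open>w\<^sub>2\<^sub>3 + w\<^sub>3\<^sub>4\<close>; but a triangle only admits single-edge matchings, and with
  positive weights only the edge 24 can carry that much.\<close>

lemma finite_matching_weights:
  assumes "finite S"
  shows "finite {sum w M | M. matching_in E S M}"
proof -
  have "{M. matching_in E S M} \<subseteq> Pow (Pow S)"
    unfolding matching_in_def by auto
  then have "finite {M. matching_in E S M}"
    using assms by (meson finite_Pow_iff rev_finite_subset)
  then show ?thesis by (simp add: setcompr_eq_image)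
qed

lemma gamma_ge_matching:
  assumes "finite S" "matching_in E S M"
  shows "sum w M \<le> gamma E w S"
  unfolding gamma_def using finite_matching_weights[OF assms(1)] assms(2)
  by (intro Max_ge) auto

lemma gamma_le_bound:
  assumes "finite S" "\<And>M. matching_in E S M \<Longrightarrow> sum w M \<le> c"
  shows "gamma E w S \<le> c"
proof -
  have "matching_in E S {}" unfolding matching_in_def by auto
  then show ?thesis
    unfolding gamma_def using finite_matching_weights[OF assms(1)] assms(2)
    by (subst Max_le_iff) auto
qed

lemma gamma_ge_edge:
  assumes "e \<in> E" "finite e"
  shows "w e \<le> gamma E w e"
  using gamma_ge_matching[of e E "{e}" w] assms unfolding matching_in_def by auto

lemma gamma_le_if_edges_intersect:
  assumes "finite S" "0 \<le> c"
    and meet: "\<And>e f. e \<in> E \<Longrightarrow> f \<in> E \<Longrightarrow> e \<subseteq> S \<Longrightarrow> f \<subseteq> S \<Longrightarrow> e \<inter> f \<noteq> {}"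
    and bound: "\<And>e. e \<in> E \<Longrightarrow> e \<subseteq> S \<Longrightarrow> w e \<le> c"
  shows "gamma E w S \<le> c"
proof (rule gamma_le_bound[OF assms(1)])
  fix M assume M: "matching_in E S M"
  show "sum w M \<le> c"
  proof (cases "M = {}")
    case True
    then show ?thesis using assms(2) by simp
  next
    case False
    then obtain e where e: "e \<in> M" by blast
    have "f = e" if "f \<in> M" for f
      using M meet[of f e] that e unfolding matching_in_def by blast
    then have "M = {e}" using e by blast
    then show ?thesis using M e bound unfolding matching_in_def by auto
  qed
qed

lemma gamma_triangle_le:
  assumes "{e \<in> E. e \<subseteq> {a, b, c}} \<subseteq> {{a, b}, {a, c}, {b, c}}"
    and "0 \<le> m" "w {a, b} \<le> m" "w {a, c} \<le> m" "w {b, c} \<le> m"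
  shows "gamma E w {a, b, c} \<le> m"
proof (rule gamma_le_if_edges_intersect)
  have triangle_edge: "e \<in> {{a, b}, {a, c}, {b, c}}" if "e \<in> E" "e \<subseteq> {a, b, c}" for e
    using assms(1) that by blast
  show "e \<inter> f \<noteq> {}" "w e \<le> m"
    if "e \<in> E" "f \<in> E" "e \<subseteq> {a, b, c}" "f \<subseteq> {a, b, c}" for e f
    using triangle_edge[OF that(1,3)] triangle_edge[OF that(2,4)] assms(3-5) by auto
qed (use assms(2) in auto)

lemma pmas_efficient:
  assumes "is_PMAS V E w x" "S \<subseteq> V" "S \<noteq> {}"
  shows "(\<Sum>i\<in>S. x S i) = gamma E w S"
  using assms unfolding is_PMAS_def by blast

lemma pmas_mono:
  assumes "is_PMAS V E w x" "i \<in> S" "S \<subseteq> T" "T \<subseteq> V"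
  shows "x S i \<le> x T i"
  using assms unfolding is_PMAS_def by blast

lemma pmas_excess_le:
  assumes "is_PMAS V E w x" "S \<noteq> {}" "S \<subseteq> T" "T \<subseteq> V" "finite T"
  shows "(\<Sum>i\<in>T - S. x T i) \<le> gamma E w T - gamma E w S"
proof -
  have "S \<subseteq> V" "T \<noteq> {}" using assms(2-4) by auto
  have "gamma E w S = (\<Sum>i\<in>S. x S i)"
    using pmas_efficient[OF assms(1) \<open>S \<subseteq> V\<close> assms(2)] by simp
  also have "\<dots> \<le> (\<Sum>i\<in>S. x T i)"
    using pmas_mono[OF assms(1) _ assms(3,4)] by (rule sum_mono)
  also have "\<dots> = (\<Sum>i\<in>T. x T i) - (\<Sum>i\<in>T - S. x T i)"
    using sum.subset_diff[OF assms(3,5), of "x T"] by simp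
  also have "(\<Sum>i\<in>T. x T i) = gamma E w T"
    using pmas_efficient[OF assms(1,4) \<open>T \<noteq> {}\<close>] .
  finally show ?thesis by simp
qed

lemma pmas_share_nonpos_if_no_gain:
  assumes "is_PMAS V E w x" "S \<noteq> {}" "S \<subseteq> T" "T \<subseteq> V" "finite T" "T - S = {k}"
    and "gamma E w T \<le> gamma E w S"
    and "k \<in> R" "R \<subseteq> T"
  shows "x R k \<le> 0"
proof -
  have "x R k \<le> x T k"
    using pmas_mono[OF assms(1,8,9,4)] .
  also have "\<dots> = (\<Sum>i\<in>T - S. x T i)"
    using assms(6) by simp
  also have "\<dots> \<le> 0"
    using pmas_excess_le[OF assms(1-5)] assms(7) by simp
  finally show ?thesis .
qed

lemma pmas_sum_le_gamma:
  assumes "is_PMAS V E w x" "T \<subseteq> V" "T \<noteq> {}"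
    and "\<And>i. i \<in> T \<Longrightarrow> i \<in> R i \<and> R i \<subseteq> T"
  shows "(\<Sum>i\<in>T. x (R i) i) \<le> gamma E w T"
proof -
  have "(\<Sum>i\<in>T. x (R i) i) \<le> (\<Sum>i\<in>T. x T i)"
    using assms(4) pmas_mono[OF assms(1) _ _ assms(2)] by (intro sum_mono) blast
  also have "\<dots> = gamma E w T"
    using pmas_efficient[OF assms(1-3)] .
  finally show ?thesis .
qed

lemma pmas_pair_sum:
  assumes "is_PMAS V E w x" "a \<in> V" "b \<in> V" "a \<noteq> b"
  shows "x {a, b} a + x {a, b} b = gamma E w {a, b}"
  using pmas_efficient[OF assms(1), of "{a, b}"] assms(2-4) by simp

theorem mainTheorem4:
  fixes V :: "'a set" and E :: "'a set set" and w :: "'a set \<Rightarrow> real"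
    and v1 v2 v3 v4 :: 'a
  assumes "simple_graph V E" and "positive_weights E w"
    and "v1 \<in> V" "v2 \<in> V" "v3 \<in> V" "v4 \<in> V"
    and "distinct [v1, v2, v3, v4]"
    and "{e \<in> E. e \<subseteq> {v1, v2, v3}} = {{v1, v2}, {v1, v3}, {v2, v3}}"
    and "{e \<in> E. e \<subseteq> {v2, v3, v4}} = {{v2, v3}, {v2, v4}, {v3, v4}}"
    and "w {v1, v2} \<ge> max (w {v1, v3}) (w {v2, v3})"
    and "population_monotonic V E w"
  shows "w {v2, v4} \<ge> w {v2, v3} + w {v3, v4}"
proof -
  obtain x where x: "is_PMAS V E w x"
    using assms(11) unfolding population_monotonic_def by blast
  have edges: "{v1, v2} \<in> E" "{v2, v3} \<in> E" "{v2, v4} \<in> E" "{v3, v4} \<in> E"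
    using assms(8,9) by blast+
  then have pos: "w {v1, v2} > 0" "w {v2, v3} > 0" "w {v2, v4} > 0" "w {v3, v4} > 0"
    using assms(2) unfolding positive_weights_def by auto
  have V: "{v1, v2, v3} \<subseteq> V" "{v2, v3, v4} \<subseteq> V" using assms(3-6) by auto
  have "gamma E w {v1, v2, v3} \<le> w {v1, v2}"
    using gamma_triangle_le[OF equalityD1[OF assms(8)]] assms(10) pos by auto
  also have "\<dots> \<le> gamma E w {v1, v2}"
    using gamma_ge_edge[OF edges(1)] by simp
  finally have "x {v2, v3} v3 \<le> 0"
    using assms(7) V(1) by (intro pmas_share_nonpos_if_no_gain[OF x, of "{v1, v2}"]) auto
  then have "x {v2, v3} v2 \<ge> gamma E w {v2, v3}"
    using pmas_pair_sum[OF x assms(4,5)] assms(7) by auto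
  moreover have "x {v3, v4} v3 + x {v3, v4} v4 = gamma E w {v3, v4}"
    using pmas_pair_sum[OF x assms(5,6)] assms(7) by auto
  moreover have "x {v2, v3} v2 + x {v3, v4} v3 + x {v3, v4} v4 \<le> gamma E w {v2, v3, v4}"
  proof -
    have "(\<Sum>i\<in>{v2, v3, v4}. x (if i = v2 then {v2, v3} else {v3, v4}) i)
        \<le> gamma E w {v2, v3, v4}"
      by (rule pmas_sum_le_gamma[OF x V(2)]) auto
    then show ?thesis using assms(7) by (auto simp: add.assoc)
  qed
  moreover have "gamma E w {v2, v3, v4} \<le> max (w {v2, v4}) (max (w {v2, v3}) (w {v3, v4}))"
    using pos by (intro gamma_triangle_le[OF equalityD1[OF assms(9)]]) auto
  ultimately show ?thesis
    using gamma_ge_edge[OF edges(2), where w = w] gamma_ge_edge[OF edges(4), where w = w] pos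
    by (auto simp: max_def split: if_splits)
qed

end
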